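(* Let $G$ be a profinite group and $X$ a scattered profinite $G$-space of finite Cantor–Bendixson rank $n$, such that each $x\in X$ has a neighbourhood basis $\mathcal{B}_x$ consisting of $\mathrm{stab}_G(x)$-invariant open sets. Let $0\to\mathrm{const}\,\mathbb{Q}\xrightarrow{\delta_0}I^0\xrightarrow{\delta_1}I^1\xrightarrow{\delta_2}\cdots$ be the equivariant Godement resolution of the constant sheaf $\mathrm{const}\,\mathbb{Q}$ (with $I^{-1}=\mathrm{const}\,\mathbb{Q}$). Then for every $x\in X$, every $U\in\mathcal{B}_x$ and every $i<\mathrm{ht}(x)$, the cokernel of $\delta_i(U)\colon I^{i-1}(U)\to I^i(U)$ contains a nonzero element represented by a $\mathrm{stab}_G(x)$-invariant section of $I^i$ over $U$.
   Context: A profinite $G$-space is a compact Hausdorff totally disconnected space with continuous $G$-action. $G$-equivariant sheaves of $\mathbb{Q}$-modules over $X$: sheaf spaces of $\mathbb{Q}$-modules $p\colon E\to X$ with continuous $G$-action making $p$ equivariant and stalk maps linear. $\mathrm{const}\,\mathbb{Q}$ is the constant sheaf with stalk $\mathbb{Q}$ and trivial action. For a $G$-sheaf $F$, $I^0(F)=\prod_A i_{A*}(F|_A)$ (product over $G$-orbits $A$, $i_{A*}$ extension by zero), $\delta_F\colon F\to I^0(F)$ the canonical monomorphism; the equivariant Godement resolution of $E$ has $C^0=E$, $I^k=I^0(C^k)$, $C^{k+1}=\mathrm{coker}(\delta_{C^k})$, and differentials the composites $I^{k}\to C^{k+1}\to I^{k+1}$. Cantor–Bendixson process, rank, scattered: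 as usual ($X^{(\alpha+1)}$ removes isolated points of $X^{(\alpha)}$, intersections at limits); $\mathrm{ht}(x)=\kappa$ with $x\in X^{(\kappa)}\setminus X^{(\kappa+1)}$. $F(U)$ denotes sections over $U$. *)

theory Defs
  imports "HOL-Analysis.Analysis" "HOL-Algebra.Group"
begin

definition totally_disconnected_space :: "'a topology \<Rightarrow> bool" where
  "totally_disconnected_space T \<longleftrightarrow>
     (\<forall>S. S \<subseteq> topspace T \<and> connectedin T S \<longrightarrow> S = {} \<or> (\<exists>a. S = {a}))"

definition profinite_space :: "'a topology \<Rightarrow> bool" where
  "profinite_space T \<longleftrightarrow> compact_space T \<and> Hausdorff_space T \<and> totally_disconnected_space T"

definition profinite_group :: "('g, 'b) monoid_scheme \<Rightarrow> 'g topology \<Rightarrow> bool" where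
  "profinite_group G TG \<longleftrightarrow> group G \<and> topspace TG = carrier G \<and> profinite_space TG \<and>
     continuous_map (prod_topology TG TG) TG (\<lambda>(a,b). a \<otimes>\<^bsub>G\<^esub> b) \<and>
     continuous_map TG TG (\<lambda>a. inv\<^bsub>G\<^esub> a)"

definition cont_action :: "('g, 'b) monoid_scheme \<Rightarrow> 'g topology \<Rightarrow> 'x topology \<Rightarrow> ('g \<Rightarrow> 'x \<Rightarrow> 'x) \<Rightarrow> bool" where
  "cont_action G TG X act \<longleftrightarrow>
     continuous_map (prod_topology TG X) X (\<lambda>(g,x). act g x) \<and>
     (\<forall>x\<in>topspace X. act \<one>\<^bsub>G\<^esub> x = x) \<and>
     (\<forall>g\<in>carrier G. \<forall>h\<in>carrier G. \<forall>x\<in>topspace X. act (g \<otimes>\<^bsub>G\<^esub> h) x = act g (act h x))"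

definition stab :: "('g, 'b) monoid_scheme \<Rightarrow> ('g \<Rightarrow> 'x \<Rightarrow> 'x) \<Rightarrow> 'x \<Rightarrow> 'g set" where
  "stab G act x = {g \<in> carrier G. act g x = x}"

definition orbits :: "('g, 'b) monoid_scheme \<Rightarrow> 'x topology \<Rightarrow> ('g \<Rightarrow> 'x \<Rightarrow> 'x) \<Rightarrow> 'x set set" where
  "orbits G X act = {(\<lambda>g. act g x) ` carrier G | x. x \<in> topspace X}"

fun cb_deriv :: "'x topology \<Rightarrow> nat \<Rightarrow> 'x set" where
  "cb_deriv X 0 = topspace X"
| "cb_deriv X (Suc k) = {x \<in> cb_deriv X k. \<not> openin (subtopology X (cb_deriv X k)) {x}}"

text \<open>Height of a point (for spaces of finite Cantor--Bendixson rank).\<close>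
definition ht :: "'x topology \<Rightarrow> 'x \<Rightarrow> nat" where
  "ht X x = (THE k. x \<in> cb_deriv X k \<and> x \<notin> cb_deriv X (Suc k))"

record ('x, 'g, 'e) gsheaf =
  tot  :: "'e topology"
  proj :: "'e \<Rightarrow> 'x"
  zer  :: "'x \<Rightarrow> 'e"
  add  :: "'e \<Rightarrow> 'e \<Rightarrow> 'e"
  smul :: "rat \<Rightarrow> 'e \<Rightarrow> 'e"
  gact :: "'g \<Rightarrow> 'e \<Rightarrow> 'e"

definition local_homeo :: "'e topology \<Rightarrow> 'x topology \<Rightarrow> ('e \<Rightarrow> 'x) \<Rightarrow> bool" where
  "local_homeo E X p \<longleftrightarrow> continuous_map E X p \<and>
     (\<forall>e\<in>topspace E. \<exists>V. openin E V \<and> e \<in> V \<and> openin X (p ` V) \<and>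
        homeomorphic_map (subtopology E V) (subtopology X (p ` V)) p)"

definition is_gsheaf :: "('g, 'b) monoid_scheme \<Rightarrow> 'g topology \<Rightarrow> 'x topology \<Rightarrow> ('g \<Rightarrow> 'x \<Rightarrow> 'x)
    \<Rightarrow> ('x, 'g, 'e) gsheaf \<Rightarrow> bool" where
  "is_gsheaf G TG X act F \<longleftrightarrow>
     (let E = topspace (tot F); p = proj F; stalk = (\<lambda>x. {e \<in> E. p e = x}) in
     local_homeo (tot F) X p \<and>
     continuous_map X (tot F) (zer F) \<and> (\<forall>x\<in>topspace X. zer F x \<in> stalk x) \<and>
     continuous_map (subtopology (prod_topology (tot F) (tot F)) {(a,b). a \<in> E \<and> b \<in> E \<and> p a = p b})
        (tot F) (\<lambda>(a,b). add F a b) \<and>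
     (\<forall>q. continuous_map (tot F) (tot F) (smul F q)) \<and>
     (\<forall>x\<in>topspace X. \<forall>a\<in>stalk x. \<forall>b\<in>stalk x. add F a b \<in> stalk x) \<and>
     (\<forall>x\<in>topspace X. \<forall>a\<in>stalk x. \<forall>q. smul F q a \<in> stalk x) \<and>
     \<comment> \<open>each stalk is a Q-vector space\<close>
     (\<forall>x\<in>topspace X. \<forall>a\<in>stalk x. \<forall>b\<in>stalk x. \<forall>c\<in>stalk x.
         add F (add F a b) c = add F a (add F b c) \<and> add F a b = add F b a \<and>
         add F (zer F x) a = a \<and> add F a (smul F (-1) a) = zer F x \<and>
         (\<forall>q r. smul F q (add F a b) = add F (smul F q a) (smul F q b) \<and>
                smul F (q + r) a = add F (smul F q a) (smul F r a) \<and>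
                smul F (q * r) a = smul F q (smul F r a)) \<and>
         smul F 1 a = a) \<and>
     \<comment> \<open>continuous G-action, p equivariant, stalk maps linear\<close>
     continuous_map (prod_topology TG (tot F)) (tot F) (\<lambda>(g,e). gact F g e) \<and>
     (\<forall>g\<in>carrier G. \<forall>e\<in>E. p (gact F g e) = act g (p e)) \<and>
     (\<forall>e\<in>E. gact F \<one>\<^bsub>G\<^esub> e = e) \<and>
     (\<forall>g\<in>carrier G. \<forall>h\<in>carrier G. \<forall>e\<in>E. gact F (g \<otimes>\<^bsub>G\<^esub> h) e = gact F g (gact F h e)) \<and>
     (\<forall>g\<in>carrier G. \<forall>x\<in>topspace X. \<forall>a\<in>stalk x. \<forall>b\<in>stalk x.
         gact F g (add F a b) = add F (gact F g a) (gact F g b) \<and>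
         (\<forall>q. gact F g (smul F q a) = smul F q (gact F g a))))"

definition gsheaf_mor :: "('g, 'b) monoid_scheme \<Rightarrow> ('x, 'g, 'e) gsheaf \<Rightarrow> ('x, 'g, 'f) gsheaf
    \<Rightarrow> ('e \<Rightarrow> 'f) \<Rightarrow> bool" where
  "gsheaf_mor G F F' f \<longleftrightarrow>
     continuous_map (tot F) (tot F') f \<and>
     (\<forall>e\<in>topspace (tot F). proj F' (f e) = proj F e) \<and>
     (\<forall>a\<in>topspace (tot F). \<forall>b\<in>topspace (tot F). proj F a = proj F b \<longrightarrow>
         f (add F a b) = add F' (f a) (f b)) \<and>
     (\<forall>a\<in>topspace (tot F). \<forall>q. f (smul F q a) = smul F' q (f a)) \<and>
     (\<forall>g\<in>carrier G. \<forall>a\<in>topspace (tot F). f (gact F g a) = gact F' g (f a))"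

definition gsheaf_iso :: "('g, 'b) monoid_scheme \<Rightarrow> ('x, 'g, 'e) gsheaf \<Rightarrow> ('x, 'g, 'f) gsheaf \<Rightarrow> bool" where
  "gsheaf_iso G F F' \<longleftrightarrow> (\<exists>f h. gsheaf_mor G F F' f \<and> gsheaf_mor G F' F h \<and>
      (\<forall>e\<in>topspace (tot F). h (f e) = e) \<and> (\<forall>e\<in>topspace (tot F'). f (h e) = e))"

definition constQ :: "'x topology \<Rightarrow> ('g \<Rightarrow> 'x \<Rightarrow> 'x) \<Rightarrow> ('x, 'g, 'x \<times> rat) gsheaf" where
  "constQ X act = \<lparr> tot = prod_topology X (discrete_topology UNIV), proj = fst,
     zer = (\<lambda>x. (x, 0)), add = (\<lambda>(x,a) (y,b). (x, a + b)), smul = (\<lambda>q (x,a). (x, q * a)),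
     gact = (\<lambda>g (x,a). (act g x, a)) \<rparr>"

definition sections :: "'x topology \<Rightarrow> ('x, 'g, 'e) gsheaf \<Rightarrow> 'x set \<Rightarrow> ('x \<Rightarrow> 'e) set" where
  "sections X F S = {s. continuous_map (subtopology X S) (tot F) s \<and>
       (\<forall>y\<in>S. proj F (s y) = y) \<and> (\<forall>y. y \<notin> S \<longrightarrow> s y = undefined)}"

definition sec_act :: "('g, 'b) monoid_scheme \<Rightarrow> ('g \<Rightarrow> 'x \<Rightarrow> 'x) \<Rightarrow> ('x, 'g, 'e) gsheaf
    \<Rightarrow> 'g \<Rightarrow> 'x set \<Rightarrow> ('x \<Rightarrow> 'e) \<Rightarrow> ('x \<Rightarrow> 'e)" where
  "sec_act G act F g S s = (\<lambda>y. if y \<in> act g ` S then gact F g (s (act (inv\<^bsub>G\<^esub> g) y)) else undefined)"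

definition sec_map :: "('e \<Rightarrow> 'f) \<Rightarrow> 'x set \<Rightarrow> ('x \<Rightarrow> 'e) \<Rightarrow> ('x \<Rightarrow> 'f)" where
  "sec_map f S s = (\<lambda>y. if y \<in> S then f (s y) else undefined)"

definition sec_add :: "('x, 'g, 'e) gsheaf \<Rightarrow> 'x set \<Rightarrow> ('x \<Rightarrow> 'e) \<Rightarrow> ('x \<Rightarrow> 'e) \<Rightarrow> ('x \<Rightarrow> 'e)" where
  "sec_add F S s t = (\<lambda>y. if y \<in> S then add F (s y) (t y) else undefined)"

definition sec_smul :: "('x, 'g, 'e) gsheaf \<Rightarrow> 'x set \<Rightarrow> rat \<Rightarrow> ('x \<Rightarrow> 'e) \<Rightarrow> ('x \<Rightarrow> 'e)" where
  "sec_smul F S q s = (\<lambda>y. if y \<in> S then smul F q (s y) else undefined)"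

text \<open>Sections of prod_A i_{A*}(F|_A) over U: families indexed by the G-orbits A of sections
  of F|_A over U \<inter> A.\<close>
definition I0_sections :: "('g, 'b) monoid_scheme \<Rightarrow> 'x topology \<Rightarrow> ('g \<Rightarrow> 'x \<Rightarrow> 'x)
    \<Rightarrow> ('x, 'g, 'e) gsheaf \<Rightarrow> 'x set \<Rightarrow> ('x set \<Rightarrow> 'x \<Rightarrow> 'e) set" where
  "I0_sections G X act F U = {t. (\<forall>A\<in>orbits G X act. t A \<in> sections X F (U \<inter> A)) \<and>
       (\<forall>A. A \<notin> orbits G X act \<longrightarrow> t A = undefined)}"

text \<open>(I, delta) is (a realisation of) I^0(F) with its canonical monomorphism delta_F:
  the sections of I are identified, naturally in U, linearly and G-equivariantly, with the
  sections of prod_A i_{A*}(F|_A), and delta_F acts on sections by restriction to the orbits.\<close>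
definition is_I0 :: "('g, 'b) monoid_scheme \<Rightarrow> 'g topology \<Rightarrow> 'x topology \<Rightarrow> ('g \<Rightarrow> 'x \<Rightarrow> 'x)
    \<Rightarrow> ('x, 'g, 'e) gsheaf \<Rightarrow> ('x, 'g, 'e) gsheaf \<Rightarrow> ('e \<Rightarrow> 'e) \<Rightarrow> bool" where
  "is_I0 G TG X act F I \<delta> \<longleftrightarrow>
     is_gsheaf G TG X act I \<and> gsheaf_mor G F I \<delta> \<and>
     (\<exists>\<Phi>. \<forall>U. openin X U \<longrightarrow>
        bij_betw (\<Phi> U) (sections X I U) (I0_sections G X act F U) \<and>
        (\<forall>s\<in>sections X F U. \<Phi> U (sec_map \<delta> U s) =
            (\<lambda>A. if A \<in> orbits G X act then restrict s (U \<inter> A) else undefined)) \<and>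
        (\<forall>V t. openin X V \<and> V \<subseteq> U \<and> t \<in> sections X I U \<longrightarrow>
            \<Phi> V (restrict t V) =
            (\<lambda>A. if A \<in> orbits G X act then restrict (\<Phi> U t A) (V \<inter> A) else undefined)) \<and>
        (\<forall>t1\<in>sections X I U. \<forall>t2\<in>sections X I U. \<Phi> U (sec_add I U t1 t2) =
            (\<lambda>A. if A \<in> orbits G X act then sec_add F (U \<inter> A) (\<Phi> U t1 A) (\<Phi> U t2 A) else undefined)) \<and>
        (\<forall>t\<in>sections X I U. \<forall>q. \<Phi> U (sec_smul I U q t) =
            (\<lambda>A. if A \<in> orbits G X act then sec_smul F (U \<inter> A) q (\<Phi> U t A) else undefined)) \<and>
        (\<forall>g\<in>carrier G. \<forall>t\<in>sections X I U. \<Phi> (act g ` U) (sec_act G act I g U t) =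
            (\<lambda>A. if A \<in> orbits G X act then sec_act G act F g (U \<inter> A) (\<Phi> U t A) else undefined)))"

text \<open>(C, q) is a cokernel of the sheaf morphism f : F \<rightarrow> F' (computed stalkwise).\<close>
definition is_cokernel :: "('g, 'b) monoid_scheme \<Rightarrow> 'g topology \<Rightarrow> 'x topology \<Rightarrow> ('g \<Rightarrow> 'x \<Rightarrow> 'x)
    \<Rightarrow> ('x, 'g, 'e) gsheaf \<Rightarrow> ('x, 'g, 'e) gsheaf \<Rightarrow> ('e \<Rightarrow> 'e)
    \<Rightarrow> ('x, 'g, 'e) gsheaf \<Rightarrow> ('e \<Rightarrow> 'e) \<Rightarrow> bool" where
  "is_cokernel G TG X act F F' f C q \<longleftrightarrow>
     is_gsheaf G TG X act C \<and> gsheaf_mor G F' C q \<and>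
     q ` topspace (tot F') = topspace (tot C) \<and>
     (\<forall>e\<in>topspace (tot F'). q e = zer C (proj F' e) \<longleftrightarrow> (\<exists>e0\<in>topspace (tot F). f e0 = e))"

text \<open>Equivariant Godement resolution of E: C^0 = E, I^k = I^0(C^k) with delta_k = delta_{C^k},
  C^{k+1} = coker(delta_k) with quotient map q_k : I^k \<rightarrow> C^{k+1}.
  The differentials are d_0 = delta_0 and d_{k+1} = delta_{k+1} \<circ> q_k.\<close>
definition godement_resolution :: "('g, 'b) monoid_scheme \<Rightarrow> 'g topology \<Rightarrow> 'x topology \<Rightarrow> ('g \<Rightarrow> 'x \<Rightarrow> 'x)
    \<Rightarrow> ('x, 'g, 'e) gsheaf \<Rightarrow> (nat \<Rightarrow> ('x, 'g, 'e) gsheaf) \<Rightarrow> (nat \<Rightarrow> ('x, 'g, 'e) gsheaf)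
    \<Rightarrow> (nat \<Rightarrow> 'e \<Rightarrow> 'e) \<Rightarrow> (nat \<Rightarrow> 'e \<Rightarrow> 'e) \<Rightarrow> bool" where
  "godement_resolution G TG X act E C I \<delta> q \<longleftrightarrow>
     C 0 = E \<and> is_gsheaf G TG X act E \<and>
     (\<forall>k. is_I0 G TG X act (C k) (I k) (\<delta> k)) \<and>
     (\<forall>k. is_cokernel G TG X act (C k) (I k) (\<delta> k) (C (Suc k)) (q k))"

text \<open>Source I^{i-1} (with I^{-1} = E) and differential delta_i : I^{i-1} \<rightarrow> I^i.\<close>
definition res_src :: "(nat \<Rightarrow> ('x, 'g, 'e) gsheaf) \<Rightarrow> (nat \<Rightarrow> ('x, 'g, 'e) gsheaf) \<Rightarrow> nat \<Rightarrow> ('x, 'g, 'e) gsheaf" where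
  "res_src C I i = (if i = 0 then C 0 else I (i - 1))"

definition res_diff :: "(nat \<Rightarrow> 'e \<Rightarrow> 'e) \<Rightarrow> (nat \<Rightarrow> 'e \<Rightarrow> 'e) \<Rightarrow> nat \<Rightarrow> 'e \<Rightarrow> 'e" where
  "res_diff \<delta> q i = (if i = 0 then \<delta> 0 else \<delta> i \<circ> q (i - 1))"

end

theory Submission
  imports Defs
begin

text \<open>By induction on \<open>k\<close>, every \<open>stab\<^sub>G(x)\<close>-invariant open \<open>U\<close> carries an invariant section
  of \<open>C\<^sup>k\<close> that is nonzero at every point of \<open>U \<inter> X\<^sup>(\<^sup>k\<^sup>)\<close>; for \<open>k = 0\<close> this is the constant
  section \<open>1\<close>. Given such a section \<open>c\<close>, take the section of \<open>I\<^sup>k = I\<^sup>0(C\<^sup>k)\<close> that equals \<open>c\<close> on the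
  orbits contained in \<open>X\<^sup>(\<^sup>k\<^sup>+\<^sup>1\<^sup>)\<close> and \<open>0\<close> on all other orbits; it is invariant because the
  derived sets are \<open>G\<close>-stable. Its image in \<open>C\<^sup>k\<^sup>+\<^sup>1\<close> cannot vanish at a point \<open>y\<close> of
  \<open>X\<^sup>(\<^sup>k\<^sup>+\<^sup>1\<^sup>)\<close>: otherwise near \<open>y\<close> it would come from a single section of \<open>C\<^sup>k\<close>, which agrees
  with \<open>c\<close> at \<open>y\<close> and hence near \<open>y\<close>, while by scatteredness points of height exactly \<open>k\<close>,
  where the cutoff is \<open>0\<close> but \<open>c\<close> is not, accumulate at \<open>y\<close>. Finally \<open>i < ht x\<close> puts \<open>x\<close>
  in \<open>X\<^sup>(\<^sup>i\<^sup>+\<^sup>1\<^sup>)\<close>, so the section of \<open>I\<^sup>i\<close> obtained this way is not in the image of \<open>\<delta>\<^sub>i\<close>.\<close>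

section \<open>Cantor--Bendixson derivatives\<close>

lemma cb_deriv_subset_topspace: "cb_deriv X k \<subseteq> topspace X"
  by (induction k) auto

lemma cb_deriv_antimono: "k \<le> m \<Longrightarrow> cb_deriv X m \<subseteq> cb_deriv X k"
  by (rule lift_Suc_antimono_le[of "cb_deriv X"]) auto

lemma cb_deriv_continuous_injective_map:
  assumes f: "continuous_map X X f" and inj: "inj_on f (topspace X)"
  shows "w \<in> cb_deriv X k \<Longrightarrow> f w \<in> cb_deriv X k"
proof (induction k arbitrary: w)
  case 0
  then show ?case using f by (auto simp: continuous_map_def)
next
  case (Suc k)
  then have wk: "w \<in> cb_deriv X k" and not_isolated: "\<not> openin (subtopology X (cb_deriv X k)) {w}"
    by auto
  show ?case
  proof (rule ccontr)
    assume "f w \<notin> cb_deriv X (Suc k)"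
    then obtain Ob where Ob: "openin X Ob" "{f w} = Ob \<inter> cb_deriv X k"
      using Suc.IH wk by (auto simp: openin_subtopology)
    define O' where "O' = {v \<in> topspace X. f v \<in> Ob}"
    have "openin X O'"
      unfolding O'_def using openin_continuous_map_preimage[OF f Ob(1)] .
    moreover have "O' \<inter> cb_deriv X k = {w}"
    proof
      show "O' \<inter> cb_deriv X k \<subseteq> {w}"
      proof
        fix v assume v: "v \<in> O' \<inter> cb_deriv X k"
        then have "f v = f w" using Suc.IH Ob(2) unfolding O'_def by auto
        then show "v \<in> {w}"
          using v wk cb_deriv_subset_topspace[of X k] inj by (auto dest: inj_onD)
      qed
      show "{w} \<subseteq> O' \<inter> cb_deriv X k"
        using Ob(2) wk cb_deriv_subset_topspace[of X k] unfolding O'_def by auto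
    qed
    ultimately have "openin (subtopology X (cb_deriv X k)) {w}"
      by (auto simp: openin_subtopology)
    then show False using not_isolated by blast
  qed
qed

text \<open>Otherwise the trace of \<open>V\<close> on \<open>cb_deriv X k\<close> has no isolated points and survives to level \<open>n\<close>.\<close>
lemma cb_deriv_open_meets_stratum:
  assumes n: "cb_deriv X n = {}" and V: "openin X V" and y: "y \<in> V \<inter> cb_deriv X k"
  shows "\<exists>z\<in>V \<inter> cb_deriv X k. z \<notin> cb_deriv X (Suc k)"
proof (rule ccontr)
  assume "\<not> ?thesis"
  then have no_isolated: "V \<inter> cb_deriv X k \<subseteq> cb_deriv X (Suc k)" by auto
  have "V \<inter> cb_deriv X k \<subseteq> cb_deriv X (k + j)" for j
  proof (induction j)
    case 0 then show ?case by auto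
  next
    case (Suc j)
    show ?case
    proof
      fix z assume z: "z \<in> V \<inter> cb_deriv X k"
      have "\<not> openin (subtopology X (cb_deriv X (k + j))) {z}"
      proof
        assume "openin (subtopology X (cb_deriv X (k + j))) {z}"
        then obtain Ob where Ob: "openin X Ob" "{z} = Ob \<inter> cb_deriv X (k + j)"
          by (auto simp: openin_subtopology)
        have "{z} = (Ob \<inter> V) \<inter> cb_deriv X k" using Ob(2) Suc.IH z by auto
        moreover have "openin X (Ob \<inter> V)" using Ob(1) V by auto
        ultimately have "openin (subtopology X (cb_deriv X k)) {z}"
          by (auto simp: openin_subtopology)
        then show False using no_isolated z by auto
      qed
      then show "z \<in> cb_deriv X (k + Suc j)" using Suc.IH z by auto
    qed
  qed
  from this[of n] show False
    using cb_deriv_antimono[of n "k + n" X] n y by auto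
qed

lemma ht_eqI:
  assumes "x \<in> cb_deriv X k" and "x \<notin> cb_deriv X (Suc k)"
  shows "ht X x = k"
  unfolding ht_def
proof (rule the_equality)
  show "x \<in> cb_deriv X k \<and> x \<notin> cb_deriv X (Suc k)" using assms ..
  fix m assume m: "x \<in> cb_deriv X m \<and> x \<notin> cb_deriv X (Suc m)"
  show "m = k"
  proof (rule ccontr)
    assume "m \<noteq> k"
    then have "Suc m \<le> k \<or> Suc k \<le> m" by linarith
    then show False
      using assms m cb_deriv_antimono[of "Suc m" k X] cb_deriv_antimono[of "Suc k" m X] by blast
  qed
qed

lemma cb_deriv_Suc_if_less_ht:
  assumes n: "cb_deriv X n = {}" and x: "x \<in> topspace X" and i: "i < ht X x"
  shows "x \<in> cb_deriv X (Suc i)"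
proof -
  have "\<exists>k. x \<in> cb_deriv X k \<and> x \<notin> cb_deriv X (Suc k)"
  proof (rule ccontr)
    assume "\<not> ?thesis"
    then have "x \<in> cb_deriv X k" for k
      using x by (induction k) auto
    then show False using n by blast
  qed
  then obtain k where k: "x \<in> cb_deriv X k" "x \<notin> cb_deriv X (Suc k)" by blast
  then have "Suc i \<le> k" using ht_eqI[OF k] i by simp
  then show ?thesis using k(1) cb_deriv_antimono[of "Suc i" k X] by blast
qed

section \<open>Sections of sheaf spaces\<close>

lemma sections_continuous: "s \<in> sections X F S \<Longrightarrow> continuous_map (subtopology X S) (tot F) s"
  unfolding sections_def by blast

lemma sections_proj: "s \<in> sections X F S \<Longrightarrow> y \<in> S \<Longrightarrow> proj F (s y) = y"
  unfolding sections_def by blast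

lemma sections_undefined: "s \<in> sections X F S \<Longrightarrow> y \<notin> S \<Longrightarrow> s y = undefined"
  unfolding sections_def by blast

lemma sections_in_topspace:
  "s \<in> sections X F S \<Longrightarrow> y \<in> S \<Longrightarrow> y \<in> topspace X \<Longrightarrow> s y \<in> topspace (tot F)"
  using sections_continuous[of s X F S] unfolding continuous_map_def by auto

lemma sectionsI:
  "continuous_map (subtopology X S) (tot F) s \<Longrightarrow> (\<And>y. y \<in> S \<Longrightarrow> proj F (s y) = y) \<Longrightarrow>
   (\<And>y. y \<notin> S \<Longrightarrow> s y = undefined) \<Longrightarrow> s \<in> sections X F S"
  unfolding sections_def by blast

lemma restrict_in_sections:
  assumes s: "s \<in> sections X F U" and V: "V \<subseteq> U"
  shows "restrict s V \<in> sections X F V"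
proof (rule sectionsI)
  show "continuous_map (subtopology X V) (tot F) (restrict s V)"
    by (rule continuous_map_eq[OF continuous_map_from_subtopology_mono[OF sections_continuous[OF s] V]])
      auto
qed (use sections_proj[OF s] V in auto)

lemma sec_map_in_sections:
  assumes f: "gsheaf_mor G F F' f" and s: "s \<in> sections X F U" and U: "U \<subseteq> topspace X"
  shows "sec_map f U s \<in> sections X F' U"
proof (rule sectionsI)
  have "continuous_map (tot F) (tot F') f" using f unfolding gsheaf_mor_def by blast
  then show "continuous_map (subtopology X U) (tot F') (sec_map f U s)"
    by (rule continuous_map_eq[OF continuous_map_compose[OF sections_continuous[OF s]]])
      (auto simp: sec_map_def)
  show "proj F' (sec_map f U s y) = y" if "y \<in> U" for y
    using f sections_proj[OF s that] sections_in_topspace[OF s that] U that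
    unfolding gsheaf_mor_def sec_map_def by auto
qed (auto simp: sec_map_def)

lemma sections_eq_near:
  assumes lh: "local_homeo (tot F) X (proj F)" and W: "openin X W"
    and s: "s \<in> sections X F W" and t: "t \<in> sections X F W" and y: "y \<in> W" and st: "s y = t y"
  shows "\<exists>W'. openin X W' \<and> y \<in> W' \<and> W' \<subseteq> W \<and> (\<forall>z\<in>W'. s z = t z)"
proof -
  have W_top: "W \<subseteq> topspace X" using W by (simp add: openin_subset)
  obtain V where V: "openin (tot F) V" "s y \<in> V"
      "homeomorphic_map (subtopology (tot F) V) (subtopology X (proj F ` V)) (proj F)"
    using lh sections_in_topspace[OF s y] y W_top unfolding local_homeo_def by blast
  have inj: "inj_on (proj F) V"
    using homeomorphic_imp_injective_map[OF V(3)] openin_subset[OF V(1)]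
    by (simp add: Int_absorb1)
  define W' where "W' = {z \<in> topspace (subtopology X W). s z \<in> V} \<inter> {z \<in> topspace (subtopology X W). t z \<in> V}"
  have "openin (subtopology X W) W'"
    unfolding W'_def
    using openin_continuous_map_preimage[OF sections_continuous[OF s] V(1)]
      openin_continuous_map_preimage[OF sections_continuous[OF t] V(1)] by auto
  then have "openin X W'" and "W' \<subseteq> W" using openin_open_subtopology[OF W] by auto
  moreover have "y \<in> W'" unfolding W'_def using y W_top V(2) st by auto
  moreover have "s z = t z" if "z \<in> W'" for z
  proof -
    have "proj F (s z) = proj F (t z)"
      using that sections_proj[OF s] sections_proj[OF t] unfolding W'_def by auto
    then show ?thesis using inj that unfolding W'_def by (auto dest: inj_onD)
  qed
  ultimately show ?thesis by blast
qed

lemma local_section_through: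
  assumes lh: "local_homeo (tot F) X (proj F)" and e: "e \<in> topspace (tot F)"
  shows "\<exists>W \<sigma>. openin X W \<and> proj F e \<in> W \<and> \<sigma> \<in> sections X F W \<and> \<sigma> (proj F e) = e"
proof -
  obtain V where V: "openin (tot F) V" "e \<in> V" "openin X (proj F ` V)"
      "homeomorphic_map (subtopology (tot F) V) (subtopology X (proj F ` V)) (proj F)"
    using lh e unfolding local_homeo_def by blast
  obtain \<sigma> where \<sigma>: "homeomorphic_maps (subtopology (tot F) V) (subtopology X (proj F ` V)) (proj F) \<sigma>"
    using V(4) homeomorphic_map_maps by blast
  have V_top: "V \<subseteq> topspace (tot F)" "proj F ` V \<subseteq> topspace X"
    using V(1,3) by (simp_all add: openin_subset)
  have "restrict \<sigma> (proj F ` V) \<in> sections X F (proj F ` V)"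
  proof (rule sectionsI)
    have "continuous_map (subtopology X (proj F ` V)) (tot F) \<sigma>"
      using \<sigma> unfolding homeomorphic_maps_def by (blast intro: continuous_map_into_fulltopology)
    then show "continuous_map (subtopology X (proj F ` V)) (tot F) (restrict \<sigma> (proj F ` V))"
      by (rule continuous_map_eq) auto
    show "proj F (restrict \<sigma> (proj F ` V) y) = y" if "y \<in> proj F ` V" for y
      using \<sigma> V_top that unfolding homeomorphic_maps_def by auto
  qed auto
  moreover have "restrict \<sigma> (proj F ` V) (proj F e) = e"
    using \<sigma> V(2) V_top unfolding homeomorphic_maps_def by auto
  ultimately show ?thesis using V(2,3) by (blast intro: imageI)
qed

definition zero_section :: "('x, 'g, 'e) gsheaf \<Rightarrow> 'x set \<Rightarrow> 'x \<Rightarrow> 'e" where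
  "zero_section F S = (\<lambda>y. if y \<in> S then zer F y else undefined)"

section \<open>Continuous actions and invariant sections\<close>

locale continuous_G_space =
  fixes G :: "('g, 'b) monoid_scheme" and TG :: "'g topology"
    and X :: "'x topology" and act :: "'g \<Rightarrow> 'x \<Rightarrow> 'x"
  assumes group_G: "group G" and topspace_TG: "topspace TG = carrier G"
    and cont_action: "cont_action G TG X act"
begin

lemma act_continuous: "g \<in> carrier G \<Longrightarrow> continuous_map X X (act g)"
proof -
  assume g: "g \<in> carrier G"
  have "continuous_map X (prod_topology TG X) (\<lambda>x. (g, x))"
    by (intro continuous_map_pairedI) (use g topspace_TG in auto)
  moreover have "continuous_map (prod_topology TG X) X (\<lambda>(g, x). act g x)"
    using cont_action unfolding cont_action_def by blast
  ultimately show ?thesis using continuous_map_compose by (fastforce simp: o_def)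
qed

lemma act_in_topspace: "g \<in> carrier G \<Longrightarrow> y \<in> topspace X \<Longrightarrow> act g y \<in> topspace X"
  using act_continuous by (auto simp: continuous_map_def)

lemma act_mult:
  "g \<in> carrier G \<Longrightarrow> h \<in> carrier G \<Longrightarrow> y \<in> topspace X \<Longrightarrow> act (g \<otimes>\<^bsub>G\<^esub> h) y = act g (act h y)"
  using cont_action unfolding cont_action_def by blast

lemma act_one: "y \<in> topspace X \<Longrightarrow> act \<one>\<^bsub>G\<^esub> y = y"
  using cont_action unfolding cont_action_def by blast

lemma act_inv_act: "g \<in> carrier G \<Longrightarrow> y \<in> topspace X \<Longrightarrow> act (inv\<^bsub>G\<^esub> g) (act g y) = y"
  using act_mult[of "inv\<^bsub>G\<^esub> g" g y] act_one group.l_inv[OF group_G] group.inv_closed[OF group_G]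
  by simp

lemma act_act_inv: "g \<in> carrier G \<Longrightarrow> y \<in> topspace X \<Longrightarrow> act g (act (inv\<^bsub>G\<^esub> g) y) = y"
  using act_mult[of g "inv\<^bsub>G\<^esub> g" y] act_one group.r_inv[OF group_G] group.inv_closed[OF group_G]
  by simp

lemma inj_on_act: "g \<in> carrier G \<Longrightarrow> inj_on (act g) (topspace X)"
  by (metis act_inv_act inj_onI)

lemma act_image_eq:
  assumes "g \<in> carrier G" and "S \<subseteq> topspace X"
    and "act g ` S \<subseteq> S" and "act (inv\<^bsub>G\<^esub> g) ` S \<subseteq> S"
  shows "act g ` S = S"
proof
  show "S \<subseteq> act g ` S"
  proof
    fix y assume y: "y \<in> S"
    then have "y = act g (act (inv\<^bsub>G\<^esub> g) y)" using assms(1,2) act_act_inv by auto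
    moreover have "act (inv\<^bsub>G\<^esub> g) y \<in> S" using assms(4) y by blast
    ultimately show "y \<in> act g ` S" by blast
  qed
qed (use assms(3) in simp)

lemma inv_in_stab: "x \<in> topspace X \<Longrightarrow> g \<in> stab G act x \<Longrightarrow> inv\<^bsub>G\<^esub> g \<in> stab G act x"
  using act_inv_act[of g x] group.inv_closed[OF group_G] unfolding stab_def by auto

lemma orbit_in_orbits: "y \<in> topspace X \<Longrightarrow> (\<lambda>h. act h y) ` carrier G \<in> orbits G X act"
  unfolding orbits_def by auto

lemma in_own_orbit: "y \<in> topspace X \<Longrightarrow> y \<in> (\<lambda>h. act h y) ` carrier G"
  using act_one[of y] monoid.one_closed[OF group.is_monoid[OF group_G]] by (metis image_eqI)

lemma orbit_act_image_subset:
  assumes A: "A \<in> orbits G X act" and g: "g \<in> carrier G"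
  shows "act g ` A \<subseteq> A"
proof -
  obtain w where w: "w \<in> topspace X" "A = (\<lambda>h. act h w) ` carrier G"
    using A unfolding orbits_def by auto
  show ?thesis
  proof
    fix y assume "y \<in> act g ` A"
    then obtain h where h: "h \<in> carrier G" "y = act g (act h w)" using w by auto
    then have "y = act (g \<otimes>\<^bsub>G\<^esub> h) w" using act_mult[OF g h(1) w(1)] by simp
    moreover have "g \<otimes>\<^bsub>G\<^esub> h \<in> carrier G"
      using monoid.m_closed[OF group.is_monoid[OF group_G] g h(1)] .
    ultimately show "y \<in> A" using w(2) by blast
  qed
qed

lemma orbit_subset_cb_deriv:
  assumes A: "A \<in> orbits G X act" and y: "y \<in> A" and yk: "y \<in> cb_deriv X k"
  shows "A \<subseteq> cb_deriv X k"
proof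
  fix z assume z: "z \<in> A"
  obtain w where w: "w \<in> topspace X" "A = (\<lambda>h. act h w) ` carrier G"
    using A unfolding orbits_def by auto
  obtain h1 h2 where h: "h1 \<in> carrier G" "y = act h1 w" "h2 \<in> carrier G" "z = act h2 w"
    using w y z by auto
  define g where "g = h2 \<otimes>\<^bsub>G\<^esub> inv\<^bsub>G\<^esub> h1"
  have g: "g \<in> carrier G"
    unfolding g_def using group_G h by (simp add: group.inv_closed group.is_monoid monoid.m_closed)
  have "act g y = act h2 (act (inv\<^bsub>G\<^esub> h1) (act h1 w))"
    unfolding g_def using h w act_mult act_in_topspace group.inv_closed[OF group_G] by simp
  also have "\<dots> = z" using h w act_inv_act by simp
  finally have "act g y = z" .
  then show "z \<in> cb_deriv X k"
    using cb_deriv_continuous_injective_map[OF act_continuous[OF g] inj_on_act[OF g] yk] by simp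
qed

definition stab_invariant :: "'x \<Rightarrow> 'x set \<Rightarrow> bool" where
  "stab_invariant x V \<longleftrightarrow> V \<subseteq> topspace X \<and> (\<forall>g\<in>stab G act x. act g ` V \<subseteq> V)"

lemma stab_invariant_act_image:
  assumes "stab_invariant x V" and "x \<in> topspace X" and "g \<in> stab G act x"
  shows "act g ` V = V"
proof (rule act_image_eq)
  show "g \<in> carrier G" using assms(3) unfolding stab_def by blast
  show "V \<subseteq> topspace X" "act g ` V \<subseteq> V" "act (inv\<^bsub>G\<^esub> g) ` V \<subseteq> V"
    using assms inv_in_stab[OF assms(2,3)] unfolding stab_invariant_def by blast+
qed

lemma stab_invariant_Int_orbit:
  assumes V: "stab_invariant x V" and A: "A \<in> orbits G X act"
  shows "stab_invariant x (V \<inter> A)"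
  unfolding stab_invariant_def
proof (intro conjI ballI)
  show "V \<inter> A \<subseteq> topspace X" using V unfolding stab_invariant_def by blast
  fix g assume g: "g \<in> stab G act x"
  have "act g ` V \<subseteq> V" using V g unfolding stab_invariant_def by blast
  moreover have "act g ` A \<subseteq> A" using g orbit_act_image_subset[OF A] unfolding stab_def by blast
  ultimately show "act g ` (V \<inter> A) \<subseteq> V \<inter> A" by blast
qed

context
  fixes F :: "('x, 'g, 'e) gsheaf"
  assumes F: "is_gsheaf G TG X act F"
begin

lemma gsheaf_local_homeo: "local_homeo (tot F) X (proj F)"
  using F unfolding is_gsheaf_def Let_def by (simp add: Ball_def)

lemma gsheaf_zer_continuous: "continuous_map X (tot F) (zer F)"
  using F unfolding is_gsheaf_def Let_def by (simp add: Ball_def)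

lemma gsheaf_proj_zer: "y \<in> topspace X \<Longrightarrow> proj F (zer F y) = y"
  using F unfolding is_gsheaf_def Let_def by (simp add: Ball_def)

lemma gsheaf_zer_in_topspace: "y \<in> topspace X \<Longrightarrow> zer F y \<in> topspace (tot F)"
  using gsheaf_zer_continuous by (auto simp: continuous_map_def)

lemma gsheaf_gact_continuous: "g \<in> carrier G \<Longrightarrow> continuous_map (tot F) (tot F) (gact F g)"
proof -
  assume g: "g \<in> carrier G"
  have "continuous_map (tot F) (prod_topology TG (tot F)) (\<lambda>e. (g, e))"
    by (intro continuous_map_pairedI) (use g topspace_TG in auto)
  moreover have "continuous_map (prod_topology TG (tot F)) (tot F) (\<lambda>(g, e). gact F g e)"
    using F unfolding is_gsheaf_def Let_def by (simp add: Ball_def)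
  ultimately show ?thesis using continuous_map_compose by (fastforce simp: o_def)
qed

lemma gsheaf_gact_proj:
  "g \<in> carrier G \<Longrightarrow> e \<in> topspace (tot F) \<Longrightarrow> proj F (gact F g e) = act g (proj F e)"
  using F unfolding is_gsheaf_def Let_def by (simp add: Ball_def)

lemma gsheaf_stalk_laws:
  assumes "y \<in> topspace X"
    and "a \<in> topspace (tot F)" "proj F a = y" "b \<in> topspace (tot F)" "proj F b = y"
    and "c \<in> topspace (tot F)" "proj F c = y"
  shows "add F (add F a b) c = add F a (add F b c)" and "add F a b = add F b a"
    and "add F (zer F y) a = a" and "add F a (smul F (-1) a) = zer F y"
    and "\<And>g. g \<in> carrier G \<Longrightarrow> gact F g (add F a b) = add F (gact F g a) (gact F g b)"
proof -
  have vs: "\<forall>y\<in>topspace X. \<forall>a\<in>{e \<in> topspace (tot F). proj F e = y}.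
      \<forall>b\<in>{e \<in> topspace (tot F). proj F e = y}. \<forall>c\<in>{e \<in> topspace (tot F). proj F e = y}.
         add F (add F a b) c = add F a (add F b c) \<and> add F a b = add F b a \<and>
         add F (zer F y) a = a \<and> add F a (smul F (-1) a) = zer F y"
    and eq: "\<forall>g\<in>carrier G. \<forall>y\<in>topspace X. \<forall>a\<in>{e \<in> topspace (tot F). proj F e = y}.
      \<forall>b\<in>{e \<in> topspace (tot F). proj F e = y}. gact F g (add F a b) = add F (gact F g a) (gact F g b)"
    using F unfolding is_gsheaf_def Let_def by meson+
  show "add F (add F a b) c = add F a (add F b c)" "add F a b = add F b a"
    "add F (zer F y) a = a" "add F a (smul F (-1) a) = zer F y"
    using vs assms by blast+
  show "\<And>g. g \<in> carrier G \<Longrightarrow> gact F g (add F a b) = add F (gact F g a) (gact F g b)"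
    using eq assms by blast
qed

lemma gsheaf_smul_in_stalk:
  "y \<in> topspace X \<Longrightarrow> a \<in> topspace (tot F) \<Longrightarrow> proj F a = y \<Longrightarrow>
   smul F r a \<in> topspace (tot F) \<and> proj F (smul F r a) = y"
  using F unfolding is_gsheaf_def Let_def by (simp add: Ball_def)

lemma stalk_idem_eq_zer:
  assumes y: "y \<in> topspace X" and b: "b \<in> topspace (tot F)" "proj F b = y"
    and idem: "add F b b = b"
  shows "b = zer F y"
proof -
  note ax = gsheaf_stalk_laws[OF y]
  have m: "smul F (-1) b \<in> topspace (tot F)" "proj F (smul F (-1) b) = y"
    using gsheaf_smul_in_stalk[OF y b] by auto
  have z: "zer F y \<in> topspace (tot F)" "proj F (zer F y) = y"
    using gsheaf_zer_in_topspace[OF y] gsheaf_proj_zer[OF y] by auto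
  have "zer F y = add F b (smul F (-1) b)" using ax(4)[OF b b b] by simp
  also have "\<dots> = add F (add F b b) (smul F (-1) b)" using idem by simp
  also have "\<dots> = add F b (zer F y)" using ax(1)[OF b b m] ax(4)[OF b b b] by simp
  also have "\<dots> = b" using ax(2)[OF b z b] ax(3)[OF b b b] by simp
  finally show ?thesis by simp
qed

lemma gact_zer:
  assumes g: "g \<in> carrier G" and y: "y \<in> topspace X"
  shows "gact F g (zer F y) = zer F (act g y)"
proof (rule stalk_idem_eq_zer)
  have z: "zer F y \<in> topspace (tot F)" "proj F (zer F y) = y"
    using gsheaf_zer_in_topspace[OF y] gsheaf_proj_zer[OF y] by auto
  show "act g y \<in> topspace X" using act_in_topspace[OF g y] .
  show "gact F g (zer F y) \<in> topspace (tot F)"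
    using gsheaf_gact_continuous[OF g] z by (auto simp: continuous_map_def)
  show "proj F (gact F g (zer F y)) = act g y" using gsheaf_gact_proj[OF g] z by simp
  have "add F (zer F y) (zer F y) = zer F y" using gsheaf_stalk_laws(3)[OF y z z z] .
  then show "add F (gact F g (zer F y)) (gact F g (zer F y)) = gact F g (zer F y)"
    using gsheaf_stalk_laws(5)[OF y z z z g] by simp
qed

lemma zero_section_in_sections:
  assumes S: "S \<subseteq> topspace X"
  shows "zero_section F S \<in> sections X F S"
proof (rule sectionsI)
  show "continuous_map (subtopology X S) (tot F) (zero_section F S)"
    by (rule continuous_map_eq[OF continuous_map_from_subtopology[OF gsheaf_zer_continuous]])
      (auto simp: zero_section_def)
qed (use S gsheaf_proj_zer in \<open>auto simp: zero_section_def\<close>)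

lemma sec_act_in_sections:
  assumes g: "g \<in> carrier G" and S: "S \<subseteq> topspace X" and gS: "act g ` S = S"
    and s: "s \<in> sections X F S"
  shows "sec_act G act F g S s \<in> sections X F S"
proof (rule sectionsI)
  have ig: "inv\<^bsub>G\<^esub> g \<in> carrier G" using group.inv_closed[OF group_G g] .
  have inv_S: "act (inv\<^bsub>G\<^esub> g) y \<in> S" if "y \<in> S" for y
  proof -
    have "y \<in> act g ` S" using that gS by simp
    then obtain w where w: "w \<in> S" and "y = act g w" by blast
    then have "act (inv\<^bsub>G\<^esub> g) y = w" using act_inv_act[OF g subsetD[OF S w]] by simp
    then show ?thesis using w by simp
  qed
  have "continuous_map (subtopology X S) X (act (inv\<^bsub>G\<^esub> g))"
    by (rule continuous_map_from_subtopology[OF act_continuous[OF ig]])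
  moreover have "act (inv\<^bsub>G\<^esub> g) ` topspace (subtopology X S) \<subseteq> S" using inv_S by auto
  ultimately have "continuous_map (subtopology X S) (subtopology X S) (act (inv\<^bsub>G\<^esub> g))"
    by (simp add: continuous_map_in_subtopology image_subset_iff_funcset)
  then have "continuous_map (subtopology X S) (tot F) (gact F g \<circ> (s \<circ> act (inv\<^bsub>G\<^esub> g)))"
    by (rule continuous_map_compose[OF continuous_map_compose[OF _ sections_continuous[OF s]]
        gsheaf_gact_continuous[OF g]])
  then show "continuous_map (subtopology X S) (tot F) (sec_act G act F g S s)"
    by (rule continuous_map_eq) (auto simp: sec_act_def gS)
  show "proj F (sec_act G act F g S s y) = y" if y: "y \<in> S" for y
  proof -
    define w where "w = act (inv\<^bsub>G\<^esub> g) y"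
    have w: "w \<in> S" "w \<in> topspace X" using inv_S[OF y] S unfolding w_def by auto
    have "proj F (gact F g (s w)) = act g (proj F (s w))"
      by (rule gsheaf_gact_proj[OF g sections_in_topspace[OF s w]])
    also have "\<dots> = y"
      using sections_proj[OF s w(1)] act_act_inv[OF g subsetD[OF S y]] unfolding w_def by simp
    finally show ?thesis using y gS unfolding w_def by (simp add: sec_act_def)
  qed
qed (use gS in \<open>simp add: sec_act_def\<close>)

end

lemma sec_act_eq_self_iff:
  assumes g: "g \<in> carrier G" and S: "S \<subseteq> topspace X" and gS: "act g ` S = S"
    and s: "s \<in> sections X F S"
  shows "sec_act G act F g S s = s \<longleftrightarrow> (\<forall>w\<in>S. gact F g (s w) = s (act g w))"
proof
  have sec_act_act: "sec_act G act F g S s (act g w) = gact F g (s w)" if "w \<in> S" for w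
    using that S gS act_inv_act[OF g] unfolding sec_act_def by auto
  show "\<forall>w\<in>S. gact F g (s w) = s (act g w)" if "sec_act G act F g S s = s"
    using that sec_act_act by metis
  assume equivariant: "\<forall>w\<in>S. gact F g (s w) = s (act g w)"
  show "sec_act G act F g S s = s"
  proof
    fix y
    show "sec_act G act F g S s y = s y"
    proof (cases "y \<in> S")
      case True
      then have "y \<in> act g ` S" using gS by simp
      then obtain w where "w \<in> S" "y = act g w" by blast
      then show ?thesis using sec_act_act equivariant by simp
    next
      case False
      then show ?thesis using gS sections_undefined[OF s] by (simp add: sec_act_def)
    qed
  qed
qed

definition invariant_sections :: "('x, 'g, 'e) gsheaf \<Rightarrow> 'x \<Rightarrow> 'x set \<Rightarrow> ('x \<Rightarrow> 'e) set" where
  "invariant_sections F x V =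
     {s \<in> sections X F V. \<forall>g\<in>stab G act x. sec_act G act F g V s = s}"

lemma invariant_sections_iff:
  assumes x: "x \<in> topspace X" and V: "stab_invariant x V" and s: "s \<in> sections X F V"
  shows "s \<in> invariant_sections F x V \<longleftrightarrow>
    (\<forall>g\<in>stab G act x. \<forall>w\<in>V. gact F g (s w) = s (act g w))"
proof -
  have "sec_act G act F g V s = s \<longleftrightarrow> (\<forall>w\<in>V. gact F g (s w) = s (act g w))"
    if "g \<in> stab G act x" for g
    using sec_act_eq_self_iff[OF _ _ stab_invariant_act_image[OF V x that] s] that V
    unfolding stab_def stab_invariant_def by blast
  then show ?thesis using s unfolding invariant_sections_def by auto
qed

lemma restrict_in_invariant_sections:
  assumes x: "x \<in> topspace X" and U: "stab_invariant x U" and V: "stab_invariant x V"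
    and VU: "V \<subseteq> U" and s: "s \<in> invariant_sections F x U"
  shows "restrict s V \<in> invariant_sections F x V"
proof -
  have s_sec: "s \<in> sections X F U" using s unfolding invariant_sections_def by blast
  have "gact F g (s w) = s (act g w)" if "g \<in> stab G act x" "w \<in> V" for g w
    using s that VU invariant_sections_iff[OF x U s_sec] by blast
  moreover have "act g w \<in> V" if "g \<in> stab G act x" "w \<in> V" for g w
    using V that unfolding stab_invariant_def by blast
  ultimately show ?thesis
    using invariant_sections_iff[OF x V restrict_in_sections[OF s_sec VU]] by simp
qed

lemma zero_section_in_invariant_sections:
  assumes F: "is_gsheaf G TG X act F" and x: "x \<in> topspace X" and V: "stab_invariant x V"
  shows "zero_section F V \<in> invariant_sections F x V"
proof -
  have V_top: "V \<subseteq> topspace X" using V unfolding stab_invariant_def by blast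
  have "gact F g (zero_section F V w) = zero_section F V (act g w)"
    if g: "g \<in> stab G act x" and w: "w \<in> V" for g w
  proof -
    have "act g w \<in> V" using V g w unfolding stab_invariant_def by blast
    then show ?thesis
      using gact_zer[OF F _ subsetD[OF V_top w]] g w unfolding stab_def zero_section_def by simp
  qed
  then show ?thesis
    using invariant_sections_iff[OF x V zero_section_in_sections[OF F V_top]] by blast
qed

lemma sec_map_in_invariant_sections:
  assumes f: "gsheaf_mor G F F' f" and x: "x \<in> topspace X" and U: "stab_invariant x U"
    and s: "s \<in> invariant_sections F x U"
  shows "sec_map f U s \<in> invariant_sections F' x U"
proof -
  have U_top: "U \<subseteq> topspace X" using U unfolding stab_invariant_def by blast
  have s_sec: "s \<in> sections X F U" using s unfolding invariant_sections_def by blast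
  have "gact F' g (sec_map f U s w) = sec_map f U s (act g w)"
    if g: "g \<in> stab G act x" and w: "w \<in> U" for g w
  proof -
    have "act g w \<in> U" using U g w unfolding stab_invariant_def by blast
    moreover have "gact F' g (f (s w)) = f (gact F g (s w))"
      using f g sections_in_topspace[OF s_sec w] w U_top unfolding gsheaf_mor_def stab_def by auto
    ultimately show ?thesis
      using invariant_sections_iff[OF x U s_sec] s g w by (simp add: sec_map_def)
  qed
  then show ?thesis
    using invariant_sections_iff[OF x U sec_map_in_sections[OF f s_sec U_top]] by blast
qed

section \<open>The sheaf \<open>I\<^sup>0\<close> and the inductive step\<close>

definition I0_chart :: "('x, 'g, 'e) gsheaf \<Rightarrow> ('x, 'g, 'e) gsheaf \<Rightarrow> ('e \<Rightarrow> 'e)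
    \<Rightarrow> ('x set \<Rightarrow> ('x \<Rightarrow> 'e) \<Rightarrow> 'x set \<Rightarrow> 'x \<Rightarrow> 'e) \<Rightarrow> bool" where
  "I0_chart F J d \<Phi> \<longleftrightarrow> (\<forall>U. openin X U \<longrightarrow>
     bij_betw (\<Phi> U) (sections X J U) (I0_sections G X act F U) \<and>
     (\<forall>s\<in>sections X F U. \<Phi> U (sec_map d U s) =
        (\<lambda>A. if A \<in> orbits G X act then restrict s (U \<inter> A) else undefined)) \<and>
     (\<forall>V t. openin X V \<and> V \<subseteq> U \<and> t \<in> sections X J U \<longrightarrow>
        \<Phi> V (restrict t V) =
        (\<lambda>A. if A \<in> orbits G X act then restrict (\<Phi> U t A) (V \<inter> A) else undefined)) \<and>
     (\<forall>g\<in>carrier G. \<forall>t\<in>sections X J U. \<Phi> (act g ` U) (sec_act G act J g U t) =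
        (\<lambda>A. if A \<in> orbits G X act then sec_act G act F g (U \<inter> A) (\<Phi> U t A) else undefined)))"

lemma is_I0_imp_chart: "is_I0 G TG X act F J d \<Longrightarrow> \<exists>\<Phi>. I0_chart F J d \<Phi>"
  unfolding is_I0_def I0_chart_def
  by (elim conjE exE, rule exI, intro allI impI, drule spec, drule (1) mp, elim conjE, intro conjI)

lemma I0_chart_bij:
  "I0_chart F J d \<Phi> \<Longrightarrow> openin X U \<Longrightarrow> bij_betw (\<Phi> U) (sections X J U) (I0_sections G X act F U)"
  unfolding I0_chart_def by blast

lemma I0_chart_sec_map:
  "I0_chart F J d \<Phi> \<Longrightarrow> openin X U \<Longrightarrow> s \<in> sections X F U \<Longrightarrow>
   \<Phi> U (sec_map d U s) A = (if A \<in> orbits G X act then restrict s (U \<inter> A) else undefined)"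
  unfolding I0_chart_def by auto

lemma I0_chart_restrict:
  "I0_chart F J d \<Phi> \<Longrightarrow> openin X V \<Longrightarrow> openin X U \<Longrightarrow> V \<subseteq> U \<Longrightarrow> t \<in> sections X J U \<Longrightarrow>
   \<Phi> V (restrict t V) A = (if A \<in> orbits G X act then restrict (\<Phi> U t A) (V \<inter> A) else undefined)"
  unfolding I0_chart_def by auto

lemma I0_chart_sec_act:
  "I0_chart F J d \<Phi> \<Longrightarrow> openin X U \<Longrightarrow> g \<in> carrier G \<Longrightarrow> t \<in> sections X J U \<Longrightarrow>
   \<Phi> (act g ` U) (sec_act G act J g U t) A =
     (if A \<in> orbits G X act then sec_act G act F g (U \<inter> A) (\<Phi> U t A) else undefined)"
  unfolding I0_chart_def by auto

lemma I0_chart_invariant_sections: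
  assumes chart: "I0_chart F J d \<Phi>" and J: "is_gsheaf G TG X act J"
    and x: "x \<in> topspace X" and Uo: "openin X U" and U: "stab_invariant x U"
    and s: "s \<in> sections X J U"
    and components: "\<And>A. A \<in> orbits G X act \<Longrightarrow> \<Phi> U s A \<in> invariant_sections F x (U \<inter> A)"
  shows "s \<in> invariant_sections J x U"
proof -
  have U_top: "U \<subseteq> topspace X" using U unfolding stab_invariant_def by blast
  have bij: "bij_betw (\<Phi> U) (sections X J U) (I0_sections G X act F U)"
    using I0_chart_bij[OF chart Uo] .
  have "sec_act G act J g U s = s" if g: "g \<in> stab G act x" for g
  proof -
    have gc: "g \<in> carrier G" using g unfolding stab_def by blast
    have gU: "act g ` U = U" using stab_invariant_act_image[OF U x g] .
    have "\<Phi> U (sec_act G act J g U s) A = \<Phi> U s A" for A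
    proof (cases "A \<in> orbits G X act")
      case True
      then have "sec_act G act F g (U \<inter> A) (\<Phi> U s A) = \<Phi> U s A"
        using components g unfolding invariant_sections_def by blast
      then show ?thesis using I0_chart_sec_act[OF chart Uo gc s, of A] gU True by simp
    next
      case False
      have "\<Phi> U s \<in> I0_sections G X act F U" using bij s unfolding bij_betw_def by blast
      then show ?thesis
        using I0_chart_sec_act[OF chart Uo gc s, of A] gU False unfolding I0_sections_def by simp
    qed
    then have "\<Phi> U (sec_act G act J g U s) = \<Phi> U s" by (rule ext)
    moreover have "sec_act G act J g U s \<in> sections X J U"
      using sec_act_in_sections[OF J gc U_top gU s] .
    ultimately show ?thesis
      using bij s unfolding bij_betw_def by (auto dest: inj_onD)
  qed
  then show ?thesis using s unfolding invariant_sections_def by blast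
qed

lemma I0_chart_germ_in_image:
  assumes chart: "I0_chart F J d \<Phi>" and F: "is_gsheaf G TG X act F"
    and J: "is_gsheaf G TG X act J" and d: "gsheaf_mor G F J d"
    and Uo: "openin X U" and s: "s \<in> sections X J U" and y: "y \<in> U"
    and e: "e \<in> topspace (tot F)" and de: "d e = s y"
  shows "\<exists>W c. openin X W \<and> y \<in> W \<and> W \<subseteq> U \<and> c \<in> sections X F W \<and>
           (\<forall>A\<in>orbits G X act. \<forall>z\<in>W \<inter> A. \<Phi> U s A z = c z)"
proof -
  have "proj F e = proj J (d e)" using d e unfolding gsheaf_mor_def by simp
  then have pe: "proj F e = y" using de sections_proj[OF s y] by simp
  obtain W0 \<sigma> where W0: "openin X W0" "y \<in> W0" and \<sigma>: "\<sigma> \<in> sections X F W0" "\<sigma> y = e"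
    using local_section_through[OF gsheaf_local_homeo[OF F] e] pe by blast
  define W1 where "W1 = W0 \<inter> U"
  have W1: "openin X W1" "y \<in> W1" "W1 \<subseteq> topspace X"
    unfolding W1_def using W0 Uo y by (auto dest: openin_subset)
  have \<sigma>1: "restrict \<sigma> W1 \<in> sections X F W1" using restrict_in_sections[OF \<sigma>(1)] W1_def by blast
  have "sec_map d W1 (restrict \<sigma> W1) y = restrict s W1 y"
    using W1(2) \<sigma>(2) de by (simp add: sec_map_def)
  then obtain W where W: "openin X W" "y \<in> W" "W \<subseteq> W1"
      and agree: "\<forall>z\<in>W. sec_map d W1 (restrict \<sigma> W1) z = restrict s W1 z"
    using sections_eq_near[OF gsheaf_local_homeo[OF J] W1(1) sec_map_in_sections[OF d \<sigma>1 W1(3)]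
        restrict_in_sections[OF s] W1(2)] W1_def by blast
  have WU: "W \<subseteq> U" using W(3) unfolding W1_def by blast
  define c where "c = restrict \<sigma> W"
  have c: "c \<in> sections X F W" unfolding c_def using restrict_in_sections[OF \<sigma>(1)] W(3) W1_def by blast
  have "restrict s W = sec_map d W c"
  proof
    fix z
    show "restrict s W z = sec_map d W c z"
    proof (cases "z \<in> W")
      case True
      then have "z \<in> W1" using W(3) by blast
      then show ?thesis using agree[rule_format, OF True] True unfolding c_def by (simp add: sec_map_def)
    qed (simp add: sec_map_def)
  qed
  then have "restrict (\<Phi> U s A) (W \<inter> A) = restrict c (W \<inter> A)" if "A \<in> orbits G X act" for A
    using I0_chart_restrict[OF chart W(1) Uo WU s, of A] I0_chart_sec_map[OF chart W(1) c, of A] that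
    by simp
  then have "\<Phi> U s A z = c z" if "A \<in> orbits G X act" "z \<in> W \<inter> A" for A z
    using fun_cong[of _ _ z] that by (metis restrict_apply')
  then show ?thesis using W(1,2) WU c by blast
qed

definition orbit_cutoff :: "('x, 'g, 'e) gsheaf \<Rightarrow> 'x set \<Rightarrow> 'x set \<Rightarrow> ('x \<Rightarrow> 'e) \<Rightarrow> 'x set \<Rightarrow> 'x \<Rightarrow> 'e" where
  "orbit_cutoff F U Y c = (\<lambda>A. if A \<in> orbits G X act then
      (if A \<subseteq> Y then restrict c (U \<inter> A) else zero_section F (U \<inter> A)) else undefined)"

lemma orbit_cutoff_in_I0_sections:
  assumes F: "is_gsheaf G TG X act F" and U: "U \<subseteq> topspace X" and c: "c \<in> sections X F U"
  shows "orbit_cutoff F U Y c \<in> I0_sections G X act F U"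
proof -
  have "U \<inter> A \<subseteq> topspace X" for A using U by blast
  then show ?thesis
    unfolding I0_sections_def orbit_cutoff_def
    using restrict_in_sections[OF c] zero_section_in_sections[OF F] by simp
qed

lemma orbit_cutoff_invariant:
  assumes F: "is_gsheaf G TG X act F" and x: "x \<in> topspace X" and U: "stab_invariant x U"
    and c: "c \<in> invariant_sections F x U" and A: "A \<in> orbits G X act"
  shows "orbit_cutoff F U Y c A \<in> invariant_sections F x (U \<inter> A)"
  using restrict_in_invariant_sections[OF x U stab_invariant_Int_orbit[OF U A] _ c]
    zero_section_in_invariant_sections[OF F x stab_invariant_Int_orbit[OF U A]] A
  unfolding orbit_cutoff_def by auto

text \<open>Near \<open>y\<close> the lift would agree with \<open>c\<close>, yet every neighbourhood of \<open>y\<close> contains a point of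
  height \<open>k\<close>, where the cutoff vanishes.\<close>
lemma orbit_cutoff_lift_not_in_image:
  assumes n: "cb_deriv X n = {}" and chart: "I0_chart F J d \<Phi>"
    and F: "is_gsheaf G TG X act F" and J: "is_gsheaf G TG X act J" and d: "gsheaf_mor G F J d"
    and Uo: "openin X U" and c: "c \<in> sections X F U"
    and c_nonzero: "\<forall>y\<in>U \<inter> cb_deriv X k. c y \<noteq> zer F y"
    and s: "s \<in> sections X J U" and \<Phi>s: "\<Phi> U s = orbit_cutoff F U (cb_deriv X (Suc k)) c"
    and yU: "y \<in> U" and y: "y \<in> cb_deriv X (Suc k)"
  shows "s y \<notin> d ` topspace (tot F)"
proof
  assume "s y \<in> d ` topspace (tot F)"
  then obtain e where e: "e \<in> topspace (tot F)" "d e = s y" by (metis imageE)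
  obtain W c' where W: "openin X W" "y \<in> W" "W \<subseteq> U" and c': "c' \<in> sections X F W"
      and c'_eq: "\<forall>A\<in>orbits G X act. \<forall>z\<in>W \<inter> A. \<Phi> U s A z = c' z"
    using I0_chart_germ_in_image[OF chart F J d Uo s yU e] by blast
  have U_top: "U \<subseteq> topspace X" using Uo by (simp add: openin_subset)
  define orbit where "orbit z = (\<lambda>h. act h z) ` carrier G" for z
  have orbit: "orbit z \<in> orbits G X act" "z \<in> orbit z" "c' z = orbit_cutoff F U (cb_deriv X (Suc k)) c (orbit z) z"
    if z: "z \<in> W" for z
  proof -
    have "z \<in> topspace X" using z W(3) U_top by blast
    then show "orbit z \<in> orbits G X act" "z \<in> orbit z"
      unfolding orbit_def by (simp_all add: orbit_in_orbits in_own_orbit)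
    then show "c' z = orbit_cutoff F U (cb_deriv X (Suc k)) c (orbit z) z"
      using c'_eq z unfolding \<Phi>s by simp
  qed
  have "orbit y \<subseteq> cb_deriv X (Suc k)" using orbit_subset_cb_deriv[OF orbit(1,2)[OF W(2)] y] .
  then have "c' y = c y" using orbit(1,2,3)[OF W(2)] W(2,3) yU unfolding orbit_cutoff_def by simp
  then obtain W' where W': "openin X W'" "y \<in> W'" "W' \<subseteq> W"
      and c'_c: "\<forall>z\<in>W'. restrict c' W z = restrict c W z"
    using sections_eq_near[OF gsheaf_local_homeo[OF F] W(1) restrict_in_sections[OF c' order_refl]
        restrict_in_sections[OF c W(3)] W(2)] W(2) by auto
  have "y \<in> W' \<inter> cb_deriv X k"
    using W'(2) y cb_deriv_antimono[of k "Suc k" X] by auto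
  then obtain z where z: "z \<in> W'" "z \<in> cb_deriv X k" "z \<notin> cb_deriv X (Suc k)"
    using cb_deriv_open_meets_stratum[OF n W'(1)] by blast
  then have zW: "z \<in> W" and zU: "z \<in> U" using W'(3) W(3) by auto
  have "\<not> orbit z \<subseteq> cb_deriv X (Suc k)" using orbit(2)[OF zW] z(3) by blast
  then have "c' z = zer F z"
    using orbit(1,3)[OF zW] orbit(2)[OF zW] zU unfolding orbit_cutoff_def zero_section_def by simp
  moreover have "c' z = c z" using c'_c z(1) zW by auto
  ultimately show False using c_nonzero z(2) zU by auto
qed

lemma I0_invariant_section_nonvanishing_in_cokernel:
  assumes n: "cb_deriv X n = {}" and F: "is_gsheaf G TG X act F"
    and I0: "is_I0 G TG X act F J d" and coker: "is_cokernel G TG X act F J d C' qq"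
    and x: "x \<in> topspace X" and Uo: "openin X U" and U: "stab_invariant x U"
    and c: "c \<in> invariant_sections F x U" and c_nonzero: "\<forall>y\<in>U \<inter> cb_deriv X k. c y \<noteq> zer F y"
  shows "\<exists>s\<in>invariant_sections J x U. \<forall>y\<in>U \<inter> cb_deriv X (Suc k). qq (s y) \<noteq> zer C' y"
proof -
  have J: "is_gsheaf G TG X act J" and d: "gsheaf_mor G F J d"
    using I0 unfolding is_I0_def by auto
  obtain \<Phi> where chart: "I0_chart F J d \<Phi>" using is_I0_imp_chart[OF I0] by blast
  have U_top: "U \<subseteq> topspace X" using Uo by (simp add: openin_subset)
  have c_sec: "c \<in> sections X F U" using c unfolding invariant_sections_def by blast
  let ?t = "orbit_cutoff F U (cb_deriv X (Suc k)) c"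
  obtain s where s: "s \<in> sections X J U" and \<Phi>s: "\<Phi> U s = ?t"
    using I0_chart_bij[OF chart Uo] orbit_cutoff_in_I0_sections[OF F U_top c_sec]
    unfolding bij_betw_def by (metis imageE)
  have "s \<in> invariant_sections J x U"
    using I0_chart_invariant_sections[OF chart J x Uo U s] orbit_cutoff_invariant[OF F x U c] \<Phi>s
    by simp
  moreover have "qq (s y) \<noteq> zer C' y" if y: "y \<in> U \<inter> cb_deriv X (Suc k)" for y
  proof
    assume "qq (s y) = zer C' y"
    moreover have "s y \<in> topspace (tot J)" "proj J (s y) = y"
      using sections_in_topspace[OF s] sections_proj[OF s] y U_top by auto
    ultimately have "s y \<in> d ` topspace (tot F)"
      using coker unfolding is_cokernel_def by (metis imageI)
    then show False
      using orbit_cutoff_lift_not_in_image[OF n chart F J d Uo c_sec c_nonzero s \<Phi>s] y by blast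
  qed
  ultimately show ?thesis by blast
qed

section \<open>The Godement resolution\<close>

lemma constQ_unit_section:
  assumes E: "is_gsheaf G TG X act E" and iso: "gsheaf_iso G E (constQ X act)"
    and x: "x \<in> topspace X" and U: "stab_invariant x U"
  shows "\<exists>c\<in>invariant_sections E x U. \<forall>y\<in>U. c y \<noteq> zer E y"
proof -
  have U_top: "U \<subseteq> topspace X" using U unfolding stab_invariant_def by blast
  obtain f h where f: "gsheaf_mor G E (constQ X act) f" and h: "gsheaf_mor G (constQ X act) E h"
    and fh: "\<forall>e\<in>topspace (tot (constQ X act)). f (h e) = e"
    using iso unfolding gsheaf_iso_def by blast
  have in_constQ: "(y, r) \<in> topspace (tot (constQ X act))" if "y \<in> topspace X" for y r
    using that by (simp add: constQ_def)
  define c where "c = (\<lambda>y. if y \<in> U then h (y, 1::rat) else undefined)"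
  have c_sec: "c \<in> sections X E U"
  proof (rule sectionsI)
    have "continuous_map X (prod_topology X (discrete_topology (UNIV::rat set))) (\<lambda>y. (y, 1))"
      by (intro continuous_map_pairedI) auto
    moreover have "continuous_map (prod_topology X (discrete_topology UNIV)) (tot E) h"
      using h unfolding gsheaf_mor_def by (simp add: constQ_def)
    ultimately have "continuous_map X (tot E) (\<lambda>y. h (y, 1))"
      using continuous_map_compose by (fastforce simp: o_def)
    then show "continuous_map (subtopology X U) (tot E) c"
      unfolding c_def by (rule continuous_map_eq[OF continuous_map_from_subtopology]) auto
    show "proj E (c y) = y" if "y \<in> U" for y
      using h in_constQ subsetD[OF U_top that] that unfolding gsheaf_mor_def c_def
      by (simp add: constQ_def)
  qed (simp add: c_def)
  have "gact E g (c w) = c (act g w)" if g: "g \<in> stab G act x" and w: "w \<in> U" for g w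
  proof -
    have "act g w \<in> U" using U g w unfolding stab_invariant_def by blast
    moreover have "gact E g (h (w, 1)) = h (gact (constQ X act) g (w, 1))"
      using h g in_constQ subsetD[OF U_top w] unfolding gsheaf_mor_def stab_def by simp
    ultimately show ?thesis using w unfolding c_def by (simp add: constQ_def)
  qed
  then have "c \<in> invariant_sections E x U" using invariant_sections_iff[OF x U c_sec] by blast
  moreover have "c y \<noteq> zer E y" if y: "y \<in> U" for y
  proof
    assume c_zer: "c y = zer E y"
    have yt: "y \<in> topspace X" using U_top y by blast
    have z: "zer E y \<in> topspace (tot E)" "proj E (zer E y) = y"
      using gsheaf_zer_in_topspace[OF E yt] gsheaf_proj_zer[OF E yt] by auto
    have "f (zer E y) = f (add E (zer E y) (zer E y))"
      using gsheaf_stalk_laws(3)[OF E yt z z z] by simp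
    also have "\<dots> = add (constQ X act) (f (zer E y)) (f (zer E y))"
      using f z unfolding gsheaf_mor_def by blast
    finally have "f (zer E y) = add (constQ X act) (f (zer E y)) (f (zer E y))" .
    moreover have "f (zer E y) = (y, 1)"
      using fh[rule_format, OF in_constQ[OF yt, of 1]] c_zer y unfolding c_def by simp
    ultimately show False by (simp add: constQ_def)
  qed
  ultimately show ?thesis by blast
qed

lemma godement_resolution_gsheaf:
  assumes "godement_resolution G TG X act E C I \<delta> q"
  shows "is_gsheaf G TG X act (C k)"
  using assms unfolding godement_resolution_def is_cokernel_def by (cases k) auto

lemma godement_invariant_section_nonvanishing:
  assumes n: "cb_deriv X n = {}" and res: "godement_resolution G TG X act E C I \<delta> q"
    and iso: "gsheaf_iso G E (constQ X act)"
    and x: "x \<in> topspace X" and Uo: "openin X U" and U: "stab_invariant x U"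
  shows "\<exists>c\<in>invariant_sections (C k) x U. \<forall>y\<in>U \<inter> cb_deriv X k. c y \<noteq> zer (C k) y"
proof (induction k)
  case 0
  have "C 0 = E" "is_gsheaf G TG X act E" using res unfolding godement_resolution_def by auto
  then show ?case using constQ_unit_section[OF _ iso x U] by auto
next
  case (Suc k)
  have I0: "is_I0 G TG X act (C k) (I k) (\<delta> k)"
    and coker: "is_cokernel G TG X act (C k) (I k) (\<delta> k) (C (Suc k)) (q k)"
    using res unfolding godement_resolution_def by auto
  obtain c where "c \<in> invariant_sections (C k) x U" "\<forall>y\<in>U \<inter> cb_deriv X k. c y \<noteq> zer (C k) y"
    using Suc.IH by blast
  then obtain s where s: "s \<in> invariant_sections (I k) x U"
      and s_nonzero: "\<forall>y\<in>U \<inter> cb_deriv X (Suc k). q k (s y) \<noteq> zer (C (Suc k)) y"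
    using I0_invariant_section_nonvanishing_in_cokernel[OF n godement_resolution_gsheaf[OF res] I0 coker x Uo U] by blast
  have "gsheaf_mor G (I k) (C (Suc k)) (q k)" using coker unfolding is_cokernel_def by blast
  then have "sec_map (q k) U s \<in> invariant_sections (C (Suc k)) x U"
    using sec_map_in_invariant_sections[OF _ x U s] by blast
  moreover have "\<forall>y\<in>U \<inter> cb_deriv X (Suc k). sec_map (q k) U s y \<noteq> zer (C (Suc k)) y"
    using s_nonzero by (simp add: sec_map_def)
  ultimately show ?case by blast
qed

lemma res_diff_in_image:
  assumes res: "godement_resolution G TG X act E C I \<delta> q"
    and r: "r \<in> sections X (res_src C I i) U" and y: "y \<in> U" "y \<in> topspace X"
  shows "res_diff \<delta> q i (r y) \<in> \<delta> i ` topspace (tot (C i))"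
proof (cases i)
  case 0
  then show ?thesis using sections_in_topspace[OF r y] by (simp add: res_src_def res_diff_def)
next
  case (Suc m)
  have "q m ` topspace (tot (I m)) = topspace (tot (C (Suc m)))"
    using res unfolding godement_resolution_def is_cokernel_def by blast
  moreover have "r y \<in> topspace (tot (I m))"
    using sections_in_topspace[OF r y] Suc by (simp add: res_src_def)
  ultimately have "q m (r y) \<in> topspace (tot (C i))" using Suc by blast
  then show ?thesis using Suc by (simp add: res_diff_def)
qed

lemma not_in_image_of_res_diff:
  assumes res: "godement_resolution G TG X act E C I \<delta> q"
    and s: "s \<in> sections X (I i) U" and y: "y \<in> U" "y \<in> topspace X"
    and nonzero: "q i (s y) \<noteq> zer (C (Suc i)) y"
  shows "s \<notin> sec_map (res_diff \<delta> q i) U ` sections X (res_src C I i) U"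
proof
  assume "s \<in> sec_map (res_diff \<delta> q i) U ` sections X (res_src C I i) U"
  then obtain r where r: "r \<in> sections X (res_src C I i) U" and "s = sec_map (res_diff \<delta> q i) U r"
    by blast
  then have "s y \<in> \<delta> i ` topspace (tot (C i))"
    using res_diff_in_image[OF res r y] y(1) by (simp add: sec_map_def)
  moreover have "s y \<in> topspace (tot (I i))" "proj (I i) (s y) = y"
    using sections_in_topspace[OF s y] sections_proj[OF s y(1)] by auto
  moreover have "\<forall>e\<in>topspace (tot (I i)). q i e = zer (C (Suc i)) (proj (I i) e) \<longleftrightarrow>
      (\<exists>e0\<in>topspace (tot (C i)). \<delta> i e0 = e)"
    using res unfolding godement_resolution_def is_cokernel_def by blast
  ultimately have "q i (s y) = zer (C (Suc i)) y" by force
  then show False using nonzero by contradiction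
qed

end

theorem proposition5p13:
  fixes G :: "('g, 'b) monoid_scheme" and TG :: "'g topology"
    and X :: "'x topology" and act :: "'g \<Rightarrow> 'x \<Rightarrow> 'x"
    and n :: nat and \<B> :: "'x \<Rightarrow> 'x set set"
    and E :: "('x, 'g, 'e) gsheaf"
    and C I :: "nat \<Rightarrow> ('x, 'g, 'e) gsheaf" and \<delta> q :: "nat \<Rightarrow> 'e \<Rightarrow> 'e"
  assumes "profinite_group G TG"
    and "profinite_space X"
    and "cont_action G TG X act"
    and "cb_deriv X n = {}" and "\<forall>m<n. cb_deriv X m \<noteq> {}"
    and "\<forall>x\<in>topspace X. \<forall>U\<in>\<B> x. openin X U \<and> x \<in> U \<and> (\<forall>g\<in>stab G act x. act g ` U \<subseteq> U)"
    and "\<forall>x\<in>topspace X. \<forall>W. openin X W \<and> x \<in> W \<longrightarrow> (\<exists>U\<in>\<B> x. U \<subseteq> W)"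
    and "gsheaf_iso G E (constQ X act)"
    and "godement_resolution G TG X act E C I \<delta> q"
  shows "\<forall>x\<in>topspace X. \<forall>U\<in>\<B> x. \<forall>i<ht X x.
           \<exists>s\<in>sections X (I i) U.
             (\<forall>g\<in>stab G act x. sec_act G act (I i) g U s = s) \<and>
             s \<notin> sec_map (res_diff \<delta> q i) U ` sections X (res_src C I i) U"
proof (intro ballI allI impI)
  note n = assms(4) and basis = assms(6) and iso = assms(8) and res = assms(9)
  interpret continuous_G_space G TG X act
    using assms(1,3) unfolding continuous_G_space_def profinite_group_def by blast
  fix x U i assume x: "x \<in> topspace X" and "U \<in> \<B> x" and i: "i < ht X x"
  then have Uo: "openin X U" and xU: "x \<in> U" and "\<forall>g\<in>stab G act x. act g ` U \<subseteq> U"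
    using basis by auto
  then have U: "stab_invariant x U" unfolding stab_invariant_def by (simp add: openin_subset)
  have I0: "is_I0 G TG X act (C i) (I i) (\<delta> i)"
    and coker: "is_cokernel G TG X act (C i) (I i) (\<delta> i) (C (Suc i)) (q i)"
    using res unfolding godement_resolution_def by auto
  obtain c where "c \<in> invariant_sections (C i) x U" "\<forall>y\<in>U \<inter> cb_deriv X i. c y \<noteq> zer (C i) y"
    using godement_invariant_section_nonvanishing[OF n res iso x Uo U] by blast
  then obtain s where s_inv: "s \<in> invariant_sections (I i) x U"
      and s_nonzero: "\<forall>y\<in>U \<inter> cb_deriv X (Suc i). q i (s y) \<noteq> zer (C (Suc i)) y"
    using I0_invariant_section_nonvanishing_in_cokernel[OF n godement_resolution_gsheaf[OF res] I0 coker x Uo U] by blast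
  then have s: "s \<in> sections X (I i) U" "\<forall>g\<in>stab G act x. sec_act G act (I i) g U s = s"
    unfolding invariant_sections_def by simp_all
  have "x \<in> U \<inter> cb_deriv X (Suc i)" using cb_deriv_Suc_if_less_ht[OF n x i] xU by simp
  then have "s \<notin> sec_map (res_diff \<delta> q i) U ` sections X (res_src C I i) U"
    using not_in_image_of_res_diff[OF res s(1) xU x] s_nonzero by simp
  with s show "\<exists>s\<in>sections X (I i) U. (\<forall>g\<in>stab G act x. sec_act G act (I i) g U s = s) \<and>
      s \<notin> sec_map (res_diff \<delta> q i) U ` sections X (res_src C I i) U"
    by blast
qed

end
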